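(* There exist an odd-like binary Euclidean LCD $[14,8,4]$ code and an odd-like binary Euclidean LCD $[16,10,4]$ code, and both are optimal, i.e. $4$ is the largest minimum distance among all binary Euclidean LCD $[14,8]$ codes and among all binary Euclidean LCD $[16,10]$ codes.
   Context: A binary $[n,k,d]$ code is a $k$-dimensional subspace of $\mathbb{F}_2^n$ with minimum nonzero Hamming weight $d$. It is Euclidean LCD if $C\cap C^{\perp_E}=\{0\}$, where $C^{\perp_E}$ is the dual with respect to $\langle x,y\rangle_E=\sum x_iy_i$. A binary code is odd-like if it contains a codeword $x$ with $\sum x_i=1$. An LCD $[n,k]$ code is optimal if its minimum distance is the largest among all LCD $[n,k]$ codes. *)

theory Defs
  imports Main
begin

text \<open>Binary vectors of length n are represented by their supports:
  a vector x in F_2^n is the set of coordinates i < n with x_i = 1.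
  Addition is symmetric difference, the zero vector is the empty set.\<close>

definition vecs :: "nat \<Rightarrow> nat set set" where
  "vecs n = Pow {..<n}"

definition vadd :: "nat set \<Rightarrow> nat set \<Rightarrow> nat set" where
  "vadd x y = (x - y) \<union> (y - x)"

definition wt :: "nat set \<Rightarrow> nat" where
  "wt x = card x"

text \<open>Euclidean inner product over F_2 (True = 1).\<close>
definition inner_E :: "nat set \<Rightarrow> nat set \<Rightarrow> bool" where
  "inner_E x y = odd (card (x \<inter> y))"

text \<open>A binary linear code of length n (a subspace of F_2^n; over F_2 closure
  under addition and containing 0 is exactly being a subspace).\<close>
definition linear_code :: "nat \<Rightarrow> nat set set \<Rightarrow> bool" where
  "linear_code n C \<longleftrightarrow> C \<subseteq> vecs n \<and> {} \<in> C \<and> (\<forall>x\<in>C. \<forall>y\<in>C. vadd x y \<in> C)"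

text \<open>Dimension k: a subspace of F_2^n has dimension k iff it has 2^k elements.\<close>
definition code_nk :: "nat \<Rightarrow> nat \<Rightarrow> nat set set \<Rightarrow> bool" where
  "code_nk n k C \<longleftrightarrow> linear_code n C \<and> card C = 2 ^ k"

text \<open>Minimum nonzero Hamming weight (only meaningful if C has a nonzero word).\<close>
definition min_dist :: "nat set set \<Rightarrow> nat" where
  "min_dist C = Min (wt ` (C - {{}}))"

definition euclid_dual :: "nat \<Rightarrow> nat set set \<Rightarrow> nat set set" where
  "euclid_dual n C = {y \<in> vecs n. \<forall>x\<in>C. \<not> inner_E x y}"

definition LCD :: "nat \<Rightarrow> nat set set \<Rightarrow> bool" where
  "LCD n C \<longleftrightarrow> C \<inter> euclid_dual n C = {{}}"

text \<open>Odd-like: contains a codeword with coordinate sum 1 in F_2, i.e. odd weight.\<close>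
definition odd_like :: "nat set set \<Rightarrow> bool" where
  "odd_like C \<longleftrightarrow> (\<exists>x\<in>C. odd (card x))"

end

theory Submission
  imports Defs
begin

text \<open>If the rows of a generator matrix G have odd weight and are pairwise orthogonal
  (G G^T = I), they are linearly independent, the code is odd-like, and a nonzero codeword,
  being the sum of a nonempty set of rows, has inner product 1 with each of these rows; so
  the code meets its dual only in 0. For explicit such 8 x 14 and 10 x 16 matrices,
  enumerating all codewords shows that the nonzero ones have weight at least 4.
  Conversely no [14, 8] or [16, 10] code, LCD or not, has minimum distance 5 or more: the
  Hamming balls of radius 2 around its codewords would be disjoint, but
  2^8 * (1 + 14 + 91) > 2^14 and 2^10 * (1 + 16 + 120) > 2^16.\<close>

lemma vadd_commute: "vadd x y = vadd y x"
  by (auto simp: vadd_def)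

lemma vadd_assoc: "vadd (vadd x y) z = vadd x (vadd y z)"
  by (auto simp: vadd_def)

lemma vadd_empty [simp]: "vadd x {} = x" "vadd {} x = x"
  by (auto simp: vadd_def)

lemma vadd_eq_empty_iff [simp]: "vadd x y = {} \<longleftrightarrow> x = y"
  by (auto simp: vadd_def)

lemma vadd_left_cancel [simp]: "vadd x y = vadd x z \<longleftrightarrow> y = z"
  by (auto simp: vadd_def)

lemma vadd_vadd_cancel [simp]: "vadd x (vadd x y) = y"
  by (auto simp: vadd_def)

lemma vadd_eq_vadd_iff: "vadd a b = vadd c d \<longleftrightarrow> vadd a c = vadd b d"
  by (auto simp: vadd_def)

lemma card_vadd:
  assumes "finite x" "finite y"
  shows "card (vadd x y) + 2 * card (x \<inter> y) = card x + card y"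
proof -
  have "card (vadd x y) = card ((x \<union> y) - (x \<inter> y))"
    by (rule arg_cong[of _ _ card]) (auto simp: vadd_def)
  also have "\<dots> = card (x \<union> y) - card (x \<inter> y)"
    using assms by (intro card_Diff_subset) auto
  finally have "card (vadd x y) = card (x \<union> y) - card (x \<inter> y)" .
  moreover have "card (x \<inter> y) \<le> card (x \<union> y)"
    using assms by (intro card_mono) auto
  ultimately show ?thesis
    using card_Un_Int[OF assms] by linarith
qed

lemma inner_E_vadd_right:
  assumes "finite a"
  shows "inner_E a (vadd x y) \<longleftrightarrow> inner_E a x \<noteq> inner_E a y"
proof -
  have "a \<inter> vadd x y = vadd (a \<inter> x) (a \<inter> y)"
    by (auto simp: vadd_def)
  moreover have "card (vadd (a \<inter> x) (a \<inter> y)) + 2 * card (a \<inter> x \<inter> y)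
      = card (a \<inter> x) + card (a \<inter> y)"
    using card_vadd[of "a \<inter> x" "a \<inter> y"] assms by (simp add: Int_ac)
  ultimately show ?thesis
    unfolding inner_E_def by presburger
qed

section \<open>Codes spanned by an orthonormal generator matrix\<close>

fun codewords :: "nat set list \<Rightarrow> nat set list" where
  "codewords [] = [{}]"
| "codewords (r # rs) = codewords rs @ map (vadd r) (codewords rs)"

lemma length_codewords: "length (codewords rs) = 2 ^ length rs"
  by (induction rs) auto

lemma empty_in_codewords: "{} \<in> set (codewords rs)"
  by (induction rs) auto

lemma row_in_codewords: "r \<in> set (codewords (r # rs))"
  using empty_in_codewords[of rs] by force

lemma codewords_subset: "\<forall>r\<in>set rs. r \<subseteq> A \<Longrightarrow> x \<in> set (codewords rs) \<Longrightarrow> x \<subseteq> A"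
  by (induction rs arbitrary: x) (auto simp: vadd_def)

lemma mem_codewords_Cons:
  "x \<in> set (codewords (r # rs)) \<longleftrightarrow> x \<in> set (codewords rs) \<or> vadd r x \<in> set (codewords rs)"
  by force

lemma vadd_in_codewords:
  "x \<in> set (codewords rs) \<Longrightarrow> y \<in> set (codewords rs) \<Longrightarrow> vadd x y \<in> set (codewords rs)"
proof (induction rs arbitrary: x y)
  case (Cons r rs)
  have shift: "vadd x (vadd r y) = vadd r (vadd x y)" "vadd (vadd r x) y = vadd r (vadd x y)" for x y
    by (auto simp: vadd_def)
  from Cons.prems show ?case
    unfolding mem_codewords_Cons
    using Cons.IH[of x y] Cons.IH[of "vadd r x" y] Cons.IH[of x "vadd r y"]
      Cons.IH[of "vadd r x" "vadd r y"]
    by (auto simp: shift)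
qed simp

lemma inner_E_codewords:
  assumes "finite a" "\<forall>r\<in>set rs. \<not> inner_E a r" "x \<in> set (codewords rs)"
  shows "\<not> inner_E a x"
  using assms(2,3)
proof (induction rs arbitrary: x)
  case (Cons r rs)
  then consider "x \<in> set (codewords rs)" | y where "y \<in> set (codewords rs)" "x = vadd r y"
    by auto
  then show ?case
    using Cons by cases (auto simp: inner_E_vadd_right[OF assms(1)])
qed (simp add: inner_E_def)

fun orthonormal :: "nat set list \<Rightarrow> bool" where
  "orthonormal [] \<longleftrightarrow> True"
| "orthonormal (r # rs) \<longleftrightarrow> inner_E r r \<and> (\<forall>s\<in>set rs. \<not> inner_E r s) \<and> orthonormal rs"

lemma distinct_codewords:
  assumes "\<forall>r\<in>set rs. finite r" "orthonormal rs"
  shows "distinct (codewords rs)"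
  using assms
proof (induction rs)
  case (Cons r rs)
  have "r \<notin> set (codewords rs)"
    using inner_E_codewords[of r rs r] Cons.prems by auto
  then have "set (codewords rs) \<inter> vadd r ` set (codewords rs) = {}"
    using vadd_in_codewords by (fastforce simp: vadd_commute)
  moreover have "inj_on (vadd r) (set (codewords rs))"
    by (rule inj_onI) simp
  ultimately show ?case
    using Cons by (simp add: distinct_map)
qed simp

lemma card_codewords:
  assumes "\<forall>r\<in>set rs. finite r" "orthonormal rs"
  shows "card (set (codewords rs)) = 2 ^ length rs"
  using distinct_card[OF distinct_codewords[OF assms]] by (simp add: length_codewords)

lemma nonzero_codeword_not_orthogonal:
  assumes "\<forall>r\<in>set rs. finite r" "orthonormal rs" "y \<in> set (codewords rs)" "y \<noteq> {}"
  shows "\<exists>x\<in>set (codewords rs). inner_E x y"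
  using assms
proof (induction rs arbitrary: y)
  case (Cons r rs)
  consider "y \<in> set (codewords rs)" | z where "z \<in> set (codewords rs)" "y = vadd r z"
    using Cons.prems(3) by auto
  then show ?case
  proof cases
    case 1
    then show ?thesis
      using Cons by auto
  next
    case 2
    have "\<not> inner_E r z"
      using inner_E_codewords[of r rs z] Cons.prems(1,2) 2 by auto
    then have "inner_E r y"
      using Cons.prems(1,2) 2 by (simp add: inner_E_vadd_right)
    then show ?thesis
      using row_in_codewords by blast
  qed
qed simp

lemma LCD_codewords:
  assumes "\<forall>r\<in>set rs. r \<subseteq> {..<n}" "orthonormal rs"
  shows "LCD n (set (codewords rs))"
proof -
  have finite: "\<forall>r\<in>set rs. finite r"
    using assms(1) finite_subset by blast
  have "y = {}" if "y \<in> set (codewords rs)" "y \<in> euclid_dual n (set (codewords rs))" for y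
    using nonzero_codeword_not_orthogonal[OF finite assms(2) that(1)] that(2)
    unfolding euclid_dual_def by blast
  moreover have "{} \<in> euclid_dual n (set (codewords rs))"
    by (simp add: euclid_dual_def inner_E_def vecs_def)
  ultimately show ?thesis
    unfolding LCD_def using empty_in_codewords by blast
qed

lemma code_nk_codewords:
  assumes "\<forall>r\<in>set rs. r \<subseteq> {..<n}" "orthonormal rs"
  shows "code_nk n (length rs) (set (codewords rs))"
proof -
  have "set (codewords rs) \<subseteq> vecs n"
    using codewords_subset[OF assms(1)] by (auto simp: vecs_def)
  then have "linear_code n (set (codewords rs))"
    unfolding linear_code_def using empty_in_codewords vadd_in_codewords by blast
  moreover have "\<forall>r\<in>set rs. finite r"
    using assms(1) finite_subset by blast
  ultimately show ?thesis
    unfolding code_nk_def using card_codewords assms(2) by blast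
qed

lemma odd_like_codewords:
  assumes "orthonormal (r # rs)"
  shows "odd_like (set (codewords (r # rs)))"
proof -
  have "odd (card r)"
    using assms by (simp add: inner_E_def)
  then show ?thesis
    unfolding odd_like_def using row_in_codewords by blast
qed

section \<open>The Hamming bound\<close>

lemma card_subsets_card_le:
  assumes "finite A"
  shows "card {B. B \<subseteq> A \<and> card B \<le> t} = (\<Sum>i\<le>t. card A choose i)"
proof -
  have "{B. B \<subseteq> A \<and> card B \<le> t} = (\<Union>i\<le>t. {B. B \<subseteq> A \<and> card B = i})"
    by auto
  also have "card \<dots> = (\<Sum>i\<le>t. card {B. B \<subseteq> A \<and> card B = i})"
    using assms by (intro card_UN_disjoint) (auto intro: finite_subset[of _ "Pow A"])
  also have "\<dots> = (\<Sum>i\<le>t. card A choose i)"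
    using n_subsets[OF assms] by simp
  finally show ?thesis .
qed

lemma finite_linear_code: "linear_code n C \<Longrightarrow> finite C"
  unfolding linear_code_def vecs_def by (auto intro: finite_subset)

lemma code_nk_nonzero_word:
  assumes "code_nk n k C" "0 < k"
  shows "C - {{}} \<noteq> {}"
proof
  assume "C - {{}} = {}"
  then have "card C \<le> 1"
    using card_mono[of "{{}}" C] by auto
  moreover have "2 \<le> card C"
    using assms by (cases k) (auto simp: code_nk_def)
  ultimately show False
    by simp
qed

lemma hamming_bound:
  assumes code: "linear_code n C" and weight: "\<forall>x\<in>C - {{}}. 2 * t < wt x"
  shows "card C * (\<Sum>i\<le>t. n choose i) \<le> 2 ^ n"
proof -
  define E where "E = {e. e \<subseteq> {..<n} \<and> card e \<le> t}"
  have "inj_on (\<lambda>(c, e). vadd c e) (C \<times> E)"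
  proof (rule inj_onI, clarify)
    fix c e c' e'
    assume "c \<in> C" "e \<in> E" "c' \<in> C" "e' \<in> E" and eq: "vadd c e = vadd c' e'"
    have "card (vadd c c') = card (vadd e e')"
      using eq by (simp add: vadd_eq_vadd_iff)
    also have "\<dots> \<le> card e + card e'"
    proof -
      have "finite e" "finite e'"
        using \<open>e \<in> E\<close> \<open>e' \<in> E\<close> by (auto simp: E_def intro: finite_subset)
      then show ?thesis
        using card_vadd[of e e'] by linarith
    qed
    also have "\<dots> \<le> 2 * t"
      using \<open>e \<in> E\<close> \<open>e' \<in> E\<close> by (simp add: E_def)
    finally have "\<not> 2 * t < wt (vadd c c')"
      by (simp add: wt_def)
    moreover have "vadd c c' \<in> C"
      using code \<open>c \<in> C\<close> \<open>c' \<in> C\<close> by (simp add: linear_code_def)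
    ultimately have "c = c'"
      using weight by auto
    then show "c = c' \<and> e = e'"
      using eq by simp
  qed
  moreover have "(\<lambda>(c, e). vadd c e) ` (C \<times> E) \<subseteq> Pow {..<n}"
    using code by (auto simp: E_def linear_code_def vecs_def vadd_def)
  ultimately have "card (C \<times> E) \<le> card (Pow {..<n})"
    by (intro card_inj_on_le) auto
  then show ?thesis
    using card_subsets_card_le[of "{..<n}" t]
    by (simp add: E_def card_cartesian_product card_Pow)
qed

lemma min_dist_le_of_hamming:
  assumes code: "code_nk n k C" and "0 < k" and "2 ^ n < 2 ^ k * (\<Sum>i\<le>t. n choose i)"
  shows "min_dist C \<le> 2 * t"
proof (rule ccontr)
  assume "\<not> min_dist C \<le> 2 * t"
  then have "2 * t < Min (wt ` (C - {{}}))"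
    by (simp add: min_dist_def)
  moreover have "finite (wt ` (C - {{}}))"
    using code finite_linear_code by (auto simp: code_nk_def)
  moreover have "wt ` (C - {{}}) \<noteq> {}"
    using code_nk_nonzero_word[OF code \<open>0 < k\<close>] by blast
  ultimately have "\<forall>x\<in>C - {{}}. 2 * t < wt x"
    using Min_gr_iff by blast
  then have "card C * (\<Sum>i\<le>t. n choose i) \<le> 2 ^ n"
    using code by (intro hamming_bound) (simp add: code_nk_def)
  then show False
    using assms(3) code by (simp add: code_nk_def)
qed

section \<open>Minimum weight by evaluation\<close>

text \<open>Codewords as bit lists, so that the weights of all \<open>2\<^sup>k\<close> codewords of a concrete
  generator matrix can be checked by evaluation; \<open>all_sums\<close> walks through them without
  building the list.\<close>

definition bits :: "nat \<Rightarrow> nat set \<Rightarrow> bool list" where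
  "bits n x = map (\<lambda>i. i \<in> x) [0..<n]"

lemma xor_bits: "map2 (\<noteq>) (bits n x) (bits n y) = bits n (vadd x y)"
  by (auto simp: bits_def vadd_def zip_map_map zip_same_conv_map)

lemma bits_empty: "bits n {} = replicate n False"
  by (simp add: bits_def map_replicate_const)

lemma length_filter_bits: "length (filter id (bits n x)) = card (x \<inter> {..<n})"
  by (simp add: bits_def distinct_length_filter Int_commute atLeast0LessThan)

fun all_sums :: "(bool list \<Rightarrow> bool) \<Rightarrow> bool list \<Rightarrow> bool list list \<Rightarrow> bool" where
  "all_sums P acc [] \<longleftrightarrow> P acc"
| "all_sums P acc (r # rs) \<longleftrightarrow> all_sums P acc rs \<and> all_sums P (map2 (\<noteq>) acc r) rs"

lemma all_sums_codewords:
  assumes "all_sums P (bits n a) (map (bits n) rs)" "x \<in> set (codewords rs)"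
  shows "P (bits n (vadd a x))"
  using assms
proof (induction rs arbitrary: a x)
  case (Cons r rs)
  have sums: "all_sums P (bits n a) (map (bits n) rs)"
    "all_sums P (bits n (vadd a r)) (map (bits n) rs)"
    using Cons.prems(1) by (simp_all only: list.map all_sums.simps xor_bits)
  consider "x \<in> set (codewords rs)" | y where "y \<in> set (codewords rs)" "x = vadd r y"
    using Cons.prems(2) by auto
  then show ?case
  proof cases
    case 1
    then show ?thesis
      using Cons.IH[OF sums(1)] by blast
  next
    case 2
    then show ?thesis
      using Cons.IH[OF sums(2)] by (simp add: vadd_assoc)
  qed
qed simp

fun weight_ge :: "nat \<Rightarrow> bool list \<Rightarrow> bool" where
  "weight_ge 0 v \<longleftrightarrow> True"
| "weight_ge (Suc d) [] \<longleftrightarrow> False"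
| "weight_ge (Suc d) (b # v) \<longleftrightarrow> (if b then weight_ge d v else weight_ge (Suc d) v)"

lemma weight_ge_iff: "weight_ge d v \<longleftrightarrow> d \<le> length (filter id v)"
  by (induction d v rule: weight_ge.induct) auto

lemma odd_like_LCD_code_with_min_dist:
  assumes rows: "\<forall>r\<in>set G. r \<subseteq> {..<n}" and orth: "orthonormal G" and "G \<noteq> []"
    and weights: "all_sums (\<lambda>v. weight_ge 1 v \<longrightarrow> weight_ge (2 * t) v)
      (replicate n False) (map (bits n) G)"
    and hamming: "2 ^ n < 2 ^ length G * (\<Sum>i\<le>t. n choose i)"
  shows "\<exists>C. code_nk n (length G) C \<and> LCD n C \<and> odd_like C \<and> min_dist C = 2 * t"
proof (intro exI conjI)
  let ?C = "set (codewords G)"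
  show code: "code_nk n (length G) ?C"
    using code_nk_codewords[OF rows orth] .
  show "LCD n ?C"
    using LCD_codewords[OF rows orth] .
  show "odd_like ?C"
    using odd_like_codewords orth \<open>G \<noteq> []\<close> by (cases G) auto
  have "min_dist ?C \<le> 2 * t"
    using min_dist_le_of_hamming[OF code _ hamming] \<open>G \<noteq> []\<close> by simp
  moreover have "2 * t \<le> wt x" if "x \<in> ?C - {{}}" for x
  proof -
    have "weight_ge 1 (bits n x) \<longrightarrow> weight_ge (2 * t) (bits n x)"
      using all_sums_codewords[OF weights[folded bits_empty]] that by simp
    moreover have "x \<subseteq> {..<n}"
      using codewords_subset[OF rows] that by blast
    moreover from this have "1 \<le> card x"
      using that finite_subset[of x "{..<n}"] by (simp add: Suc_le_eq card_gt_0_iff)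
    ultimately show ?thesis
      by (simp add: weight_ge_iff length_filter_bits wt_def Int_absorb2)
  qed
  then have "2 * t \<le> min_dist ?C"
    using code_nk_nonzero_word[OF code] \<open>G \<noteq> []\<close> finite_linear_code code
    by (auto simp: min_dist_def code_nk_def)
  ultimately show "min_dist ?C = 2 * t"
    by simp
qed

definition G14 :: "nat set list" where
  "G14 =
    [{0, 1, 2, 3, 6, 7, 9, 10, 12},
     {0, 1, 3, 4, 5, 8, 9, 10, 12},
     {0, 2, 3, 4, 9, 10, 11, 12, 13},
     {2, 3, 5, 6, 7, 9, 10, 11, 13},
     {0, 1, 3, 5, 6, 7, 8, 9, 13},
     {3, 4, 5, 7, 8, 9, 11, 12, 13},
     {0, 3, 4, 8, 13},
     {0, 2, 6, 9, 13}]"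

definition G16 :: "nat set list" where
  "G16 =
    [{2, 4, 5, 7, 10, 11, 12, 13, 15},
     {0, 3, 4, 5, 6, 7, 8, 9, 10, 13, 15},
     {1, 4, 5, 6, 8, 9, 10, 11, 14},
     {0, 1, 2, 4, 5, 14, 15},
     {2, 6, 10, 13, 15},
     {2, 3, 4, 5, 7, 8, 12, 13, 14},
     {4, 5, 7, 8, 10, 12, 13},
     {2, 3, 4, 5, 15},
     {0, 3, 5, 8, 10, 11, 13},
     {0, 1, 4, 6, 11, 12, 15}]"

lemma G14_rows: "\<forall>r\<in>set G14. r \<subseteq> {..<14}"
  by (simp add: G14_def)

lemma G16_rows: "\<forall>r\<in>set G16. r \<subseteq> {..<16}"
  by (simp add: G16_def)

lemma G14_orthonormal: "orthonormal G14"
  unfolding G14_def by code_simp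

lemma G16_orthonormal: "orthonormal G16"
  unfolding G16_def by code_simp

lemma G14_weights:
  "all_sums (\<lambda>v. weight_ge 1 v \<longrightarrow> weight_ge 4 v) (replicate 14 False) (map (bits 14) G14)"
  unfolding G14_def by code_simp

lemma G16_weights:
  "all_sums (\<lambda>v. weight_ge 1 v \<longrightarrow> weight_ge 4 v) (replicate 16 False) (map (bits 16) G16)"
  unfolding G16_def by code_simp

theorem proposition3p8:
  shows "(\<exists>C. code_nk 14 8 C \<and> LCD 14 C \<and> odd_like C \<and> min_dist C = 4)
       \<and> (\<exists>C. code_nk 16 10 C \<and> LCD 16 C \<and> odd_like C \<and> min_dist C = 4)
       \<and> (\<forall>C. code_nk 14 8 C \<and> LCD 14 C \<longrightarrow> min_dist C \<le> 4)
       \<and> (\<forall>C. code_nk 16 10 C \<and> LCD 16 C \<longrightarrow> min_dist C \<le> 4)"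
proof (intro conjI allI impI)
  have hamming14: "(2::nat) ^ 14 < 2 ^ 8 * (\<Sum>i\<le>2. 14 choose i)"
    and hamming16: "(2::nat) ^ 16 < 2 ^ 10 * (\<Sum>i\<le>2. 16 choose i)"
    by (simp_all add: atMost_nat_numeral choose_two)
  have G14: "length G14 = 8" "G14 \<noteq> []" and G16: "length G16 = 10" "G16 \<noteq> []"
    by (simp_all add: G14_def G16_def)
  show "\<exists>C. code_nk 14 8 C \<and> LCD 14 C \<and> odd_like C \<and> min_dist C = 4"
    using odd_like_LCD_code_with_min_dist[of G14 14 2] G14_rows G14_orthonormal G14_weights
      G14 hamming14 by simp
  show "\<exists>C. code_nk 16 10 C \<and> LCD 16 C \<and> odd_like C \<and> min_dist C = 4"
    using odd_like_LCD_code_with_min_dist[of G16 16 2] G16_rows G16_orthonormal G16_weights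
      G16 hamming16 by simp
  show "min_dist C \<le> 4" if "code_nk 14 8 C \<and> LCD 14 C" for C
    using min_dist_le_of_hamming[OF _ _ hamming14] that by simp
  show "min_dist C \<le> 4" if "code_nk 16 10 C \<and> LCD 16 C" for C
    using min_dist_le_of_hamming[OF _ _ hamming16] that by simp
qed

end
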